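(* Let $G$ be a graph on vertex set $[n]$ with Laplacian matrix $L$, let $k\ge2$ be an integer, let $J$ be the $n\times n$ all-ones matrix and $e\in\mathbb R^n$ the all-ones vector. Define $MkC_v(G)=\max\{\tfrac12\langle L,Z\rangle: Z,X\in\mathbb S^n,\ X_{ii}=0,\ Z_{ii}=1\ (i\in[n]),\ Z\ge0,\ X\ge0,\ Z-X\succeq0,\ Z+(k-1)X-J\succeq0\}$ and $MkC_m(G)=\max\{\tfrac12\langle L,Z\rangle: Z\in\mathbb S^n,\ Z_{ii}=1\ (i\in[n]),\ Z\ge0,\ Z-\tfrac1kJ\succeq0\}$; and define $Ek_v(G)$ and $Ek_m(G)$ as the corresponding minima of $\tfrac12\langle L,Z\rangle$ over the same feasible sets, each with the additional constraint $Ze=\tfrac nk e$. Then $MkC_v(G)=MkC_m(G)$ and $Ek_v(G)=Ek_m(G)$; more precisely, for each of the two pairs, every feasible solution of one problem yields a feasible solution of the other with the same objective value.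
   Context: $\mathbb S^n$ denotes real symmetric $n\times n$ matrices; $\langle A,B\rangle=\mathrm{trace}(AB)$; $\ge0$ entrywise nonnegativity; $\succeq0$ positive semidefiniteness. The Laplacian of $G$ is $L=D-A$ with $A$ the adjacency matrix and $D$ the diagonal degree matrix. *)

theory Defs
  imports "HOL-Analysis.Analysis"
begin

text \<open>Matrices are indexed by a finite type 'n whose elements are the vertices [n];
  n = CARD('n). A (simple) graph is given by a symmetric irreflexive adjacency relation.\<close>

definition simple_graph :: "('n::finite \<Rightarrow> 'n \<Rightarrow> bool) \<Rightarrow> bool" where
  "simple_graph E \<longleftrightarrow> (\<forall>i j. E i j \<longrightarrow> E j i) \<and> (\<forall>i. \<not> E i i)"

definition adjacency_matrix :: "('n::finite \<Rightarrow> 'n \<Rightarrow> bool) \<Rightarrow> real^'n^'n" where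
  "adjacency_matrix E = (\<chi> i j. if E i j then 1 else 0)"

definition degree_matrix :: "('n::finite \<Rightarrow> 'n \<Rightarrow> bool) \<Rightarrow> real^'n^'n" where
  "degree_matrix E = (\<chi> i j. if i = j then (\<Sum>l\<in>UNIV. adjacency_matrix E $ i $ l) else 0)"

definition laplacian :: "('n::finite \<Rightarrow> 'n \<Rightarrow> bool) \<Rightarrow> real^'n^'n" where
  "laplacian E = degree_matrix E - adjacency_matrix E"

definition frob :: "real^'n^'n \<Rightarrow> real^'n^'n \<Rightarrow> real" where
  "frob A B = trace (A ** B)"

definition symmetric_mat :: "real^'n^'n \<Rightarrow> bool" where
  "symmetric_mat A \<longleftrightarrow> transpose A = A"

definition psd :: "real^'n^'n \<Rightarrow> bool" where
  "psd A \<longleftrightarrow> symmetric_mat A \<and> (\<forall>x. 0 \<le> x \<bullet> (A *v x))"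

definition nonneg_mat :: "real^'n^'n \<Rightarrow> bool" where
  "nonneg_mat A \<longleftrightarrow> (\<forall>i j. 0 \<le> A $ i $ j)"

definition J_mat :: "real^'n^'n" where
  "J_mat = (\<chi> i j. 1)"

definition ones_vec :: "real^'n" where
  "ones_vec = (\<chi> i. 1)"

definition obj :: "('n::finite \<Rightarrow> 'n \<Rightarrow> bool) \<Rightarrow> real^'n^'n \<Rightarrow> real" where
  "obj E Z = frob (laplacian E) Z / 2"

definition feas_v :: "nat \<Rightarrow> real^'n::finite^'n \<Rightarrow> real^'n^'n \<Rightarrow> bool" where
  "feas_v k Z X \<longleftrightarrow> symmetric_mat Z \<and> symmetric_mat X \<and>
     (\<forall>i. X $ i $ i = 0) \<and> (\<forall>i. Z $ i $ i = 1) \<and> nonneg_mat Z \<and> nonneg_mat X \<and>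
     psd (Z - X) \<and> psd (Z + (real k - 1) *\<^sub>R X - J_mat)"

definition feas_m :: "nat \<Rightarrow> real^'n::finite^'n \<Rightarrow> bool" where
  "feas_m k Z \<longleftrightarrow> symmetric_mat Z \<and> (\<forall>i. Z $ i $ i = 1) \<and> nonneg_mat Z \<and>
     psd (Z - (1 / real k) *\<^sub>R J_mat)"

definition equi :: "nat \<Rightarrow> real^'n::finite^'n \<Rightarrow> bool" where
  "equi k Z \<longleftrightarrow> Z *v ones_vec = (real CARD('n) / real k) *\<^sub>R ones_vec"

definition MkC_v :: "nat \<Rightarrow> ('n::finite \<Rightarrow> 'n \<Rightarrow> bool) \<Rightarrow> real" where
  "MkC_v k E = Sup {obj E Z | Z X. feas_v k Z X}"

definition MkC_m :: "nat \<Rightarrow> ('n::finite \<Rightarrow> 'n \<Rightarrow> bool) \<Rightarrow> real" where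
  "MkC_m k E = Sup {obj E Z | Z. feas_m k Z}"

definition Ek_v :: "nat \<Rightarrow> ('n::finite \<Rightarrow> 'n \<Rightarrow> bool) \<Rightarrow> real" where
  "Ek_v k E = Inf {obj E Z | Z X. feas_v k Z X \<and> equi k Z}"

definition Ek_m :: "nat \<Rightarrow> ('n::finite \<Rightarrow> 'n \<Rightarrow> bool) \<Rightarrow> real" where
  "Ek_m k E = Inf {obj E Z | Z. feas_m k Z \<and> equi k Z}"

end

theory Submission
  imports Defs
begin

text \<open>From a feasible pair (Z, X) of the vector formulation, Z alone is feasible for the matrix
  formulation, since Z - J/k = ((k-1)(Z - X) + (Z + (k-1)X - J)) / k is a nonnegative combination
  of the two positive semidefinite constraint matrices. Conversely, a feasible Z of the matrix
  formulation has off-diagonal entries at most 1, so X = (J - Z)/(k-1) is nonnegative, makes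
  Z + (k-1)X - J vanish, and gives Z - X = k/(k-1) (Z - J/k). The objective and the constraint
  Ze = (n/k)e involve Z only, so both pairs of problems have the same sets of objective values.\<close>

lemma symmetric_mat_iff: "symmetric_mat (A::real^'n::finite^'n) \<longleftrightarrow> (\<forall>i j. A$i$j = A$j$i)"
  unfolding symmetric_mat_def transpose_def vec_eq_iff by auto

lemma psd_0: "psd (0::real^'n::finite^'n)"
  unfolding psd_def symmetric_mat_iff by simp

lemma psd_add: "psd A \<Longrightarrow> psd B \<Longrightarrow> psd (A + B)"
  unfolding psd_def symmetric_mat_iff
  by (simp add: matrix_vector_mult_add_rdistrib inner_add_right)

lemma psd_scaleR: "psd A \<Longrightarrow> 0 \<le> c \<Longrightarrow> psd (c *\<^sub>R A)"
  unfolding psd_def symmetric_mat_iff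
  by (simp add: scaleR_matrix_vector_assoc[symmetric])

lemma psd_offdiag_le:
  fixes M :: "real^'n::finite^'n"
  assumes "psd M"
  shows "M$i$j + M$j$i \<le> M$i$i + M$j$j"
proof -
  let ?x = "axis i (1::real) - axis j 1"
  have "0 \<le> ?x \<bullet> (M *v ?x)"
    using assms unfolding psd_def by blast
  also have "\<dots> = M$i$i - M$j$i - M$i$j + M$j$j"
    by (simp add: matrix_vector_mult_diff_distrib inner_diff_left inner_diff_right
        matrix_vector_mult_basis inner_axis' column_def)
  finally show ?thesis by simp
qed

lemma feas_m_entry_le_1:
  fixes Z :: "real^'n::finite^'n"
  assumes "feas_m k Z"
  shows "Z$i$j \<le> 1"
proof -
  have "psd (Z - (1 / real k) *\<^sub>R J_mat)" and "Z$i$i = 1" "Z$j$j = 1" "Z$j$i = Z$i$j"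
    using assms unfolding feas_m_def symmetric_mat_iff by auto
  then show ?thesis
    using psd_offdiag_le[of "Z - (1 / real k) *\<^sub>R J_mat" i j] by (simp add: J_mat_def)
qed

lemma feas_v_imp_feas_m:
  fixes Z X :: "real^'n::finite^'n"
  assumes feas: "feas_v k Z X" and "k \<ge> 1"
  shows "feas_m k Z"
proof -
  have "real k > 0" "real k - 1 \<ge> 0"
    using \<open>k \<ge> 1\<close> by auto
  have "Z - (1 / real k) *\<^sub>R J_mat =
      (1 / real k) *\<^sub>R ((real k - 1) *\<^sub>R (Z - X) + (Z + (real k - 1) *\<^sub>R X - J_mat))"
    using \<open>real k > 0\<close> unfolding vec_eq_iff by (simp add: field_simps)
  moreover have "psd \<dots>"
    using feas \<open>real k > 0\<close> \<open>real k - 1 \<ge> 0\<close> unfolding feas_v_def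
    by (intro psd_scaleR psd_add) auto
  ultimately show ?thesis
    using feas unfolding feas_v_def feas_m_def by auto
qed

lemma feas_m_imp_feas_v:
  fixes Z :: "real^'n::finite^'n"
  assumes feas: "feas_m k Z" and "k \<ge> 2"
  shows "feas_v k Z ((1 / (real k - 1)) *\<^sub>R (J_mat - Z))"
proof -
  define X where "X = (1 / (real k - 1)) *\<^sub>R (J_mat - Z)"
  have "real k - 1 > 0"
    using \<open>k \<ge> 2\<close> by simp
  have sym: "symmetric_mat Z" and diag: "\<forall>i. Z$i$i = 1" and nonneg: "nonneg_mat Z"
    and psd: "psd (Z - (1 / real k) *\<^sub>R J_mat)"
    using feas unfolding feas_m_def by auto
  have "symmetric_mat X"
    using sym unfolding X_def symmetric_mat_iff J_mat_def by simp
  moreover have "\<forall>i. X$i$i = 0"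
    using diag unfolding X_def J_mat_def by simp
  moreover have "nonneg_mat X"
    using feas_m_entry_le_1[OF feas] \<open>real k - 1 > 0\<close>
    unfolding X_def J_mat_def nonneg_mat_def by simp
  moreover have "psd (Z - X)"
  proof -
    have "Z - X = (real k / (real k - 1)) *\<^sub>R (Z - (1 / real k) *\<^sub>R J_mat)"
      using \<open>real k - 1 > 0\<close> unfolding X_def vec_eq_iff by (simp add: field_simps)
    then show ?thesis
      using psd_scaleR[OF psd, of "real k / (real k - 1)"] \<open>real k - 1 > 0\<close> by simp
  qed
  moreover have "Z + (real k - 1) *\<^sub>R X - J_mat = 0"
    using \<open>real k - 1 > 0\<close> unfolding X_def vec_eq_iff by simp
  ultimately show ?thesis
    using sym diag nonneg psd_0 unfolding feas_v_def X_def by metis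
qed

theorem mainTheorem11:
  fixes E :: "'n::finite \<Rightarrow> 'n \<Rightarrow> bool" and k :: nat
  assumes "simple_graph E" and "k \<ge> 2"
  shows "MkC_v k E = MkC_m k E \<and> Ek_v k E = Ek_m k E
    \<and> (\<forall>Z X. feas_v k Z X \<longrightarrow> (\<exists>Z'. feas_m k Z' \<and> obj E Z' = obj E Z))
    \<and> (\<forall>Z. feas_m k Z \<longrightarrow> (\<exists>Z' X'. feas_v k Z' X' \<and> obj E Z' = obj E Z))
    \<and> (\<forall>Z X. feas_v k Z X \<and> equi k Z \<longrightarrow>
          (\<exists>Z'. feas_m k Z' \<and> equi k Z' \<and> obj E Z' = obj E Z))
    \<and> (\<forall>Z. feas_m k Z \<and> equi k Z \<longrightarrow>
          (\<exists>Z' X'. feas_v k Z' X' \<and> equi k Z' \<and> obj E Z' = obj E Z))"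
proof -
  have v_to_m: "feas_v k Z X \<Longrightarrow> feas_m k Z" for Z X :: "real^'n^'n"
    using feas_v_imp_feas_m[of k Z X] \<open>k \<ge> 2\<close> by simp
  have m_to_v: "feas_m k Z \<Longrightarrow> \<exists>X. feas_v k Z X" for Z :: "real^'n^'n"
    using feas_m_imp_feas_v \<open>k \<ge> 2\<close> by blast
  have max_values: "{obj E Z | Z X. feas_v k Z X} = {obj E Z | Z. feas_m k Z}"
    using v_to_m m_to_v by blast
  have equi_values:
    "{obj E Z | Z X. feas_v k Z X \<and> equi k Z} = {obj E Z | Z. feas_m k Z \<and> equi k Z}"
    using v_to_m m_to_v by blast
  show ?thesis
    unfolding MkC_v_def MkC_m_def Ek_v_def Ek_m_def max_values equi_values
    using v_to_m m_to_v by blast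
qed

end
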